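(* There exists a metric measure space $\mathfrak X=(X,\rho,\mu)$, with $X$ countable and $\mu$ counting measure, such that: (i) for each $p\in(1,\infty)$ there is $C_p<\infty$ with $\|f\|_{*,p}\le C_p\|f\|_{*}$ for all $f\in{\rm BMO}(\mathfrak X)$ (so all ${\rm BMO}^p(\mathfrak X)$ coincide); (ii) there exists $g\in{\rm BMO}(\mathfrak X)$ such that for every $l\in\mathbb N$ there are an open ball $B_l\subset X$ and $\lambda_l>0$ with $\frac{|\{x\in B_l:|g(x)-g_{B_l}|>\lambda_l\}|}{|B_l|}>l\exp(-\lambda_l/l)$; in particular there are no constants $c_1,c_2>0$ with $\frac{|\{x\in B:|f(x)-f_B|>\lambda\}|}{|B|}\le c_1\exp(-c_2\lambda/\|f\|_* )$ for all $f\in{\rm BMO}(\mathfrak X)$, balls $B$ and $\lambda>0$.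
   Context: For locally integrable $f$ and an open ball $B$ with $\mu(B)\in(0,\infty)$, $f_B=\mu(B)^{-1}\int_Bf\,d\mu$; $\|f\|_{*,p}=\sup_B(\mu(B)^{-1}\int_B|f-f_B|^pd\mu)^{1/p}$ over such balls, $\|f\|_*=\|f\|_{*,1}$, and ${\rm BMO}(\mathfrak X)=\{f:\|f\|_*<\infty\}$, ${\rm BMO}^p$ analogously. $|E|$ denotes $\mu(E)$. *)

theory Defs
  imports "HOL-Analysis.Analysis"
begin

text \<open>A metric space structure on a carrier set X (here X is a set of naturals,
  i.e. an arbitrary countable set up to relabelling).  The measure is the counting
  measure on X, so for finite E we have |E| = card E and integrals over a finite
  ball are finite sums.\<close>

definition metric_on :: "'a set \<Rightarrow> ('a \<Rightarrow> 'a \<Rightarrow> real) \<Rightarrow> bool" where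
  "metric_on X \<rho> \<longleftrightarrow>
     (\<forall>x\<in>X. \<forall>y\<in>X. 0 \<le> \<rho> x y \<and> (\<rho> x y = 0 \<longleftrightarrow> x = y) \<and> \<rho> x y = \<rho> y x) \<and>
     (\<forall>x\<in>X. \<forall>y\<in>X. \<forall>z\<in>X. \<rho> x z \<le> \<rho> x y + \<rho> y z)"

definition oball :: "'a set \<Rightarrow> ('a \<Rightarrow> 'a \<Rightarrow> real) \<Rightarrow> 'a \<Rightarrow> real \<Rightarrow> 'a set" where
  "oball X \<rho> x r = {y\<in>X. \<rho> x y < r}"

text \<open>Open balls B with counting measure |B| in (0,\<infinity>), i.e. nonempty finite balls.\<close>
definition adm_balls :: "'a set \<Rightarrow> ('a \<Rightarrow> 'a \<Rightarrow> real) \<Rightarrow> 'a set set" where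
  "adm_balls X \<rho> = {B. (\<exists>x\<in>X. \<exists>r>0. B = oball X \<rho> x r) \<and> B \<noteq> {} \<and> finite B}"

definition avg :: "('a \<Rightarrow> real) \<Rightarrow> 'a set \<Rightarrow> real" where
  "avg f B = (\<Sum>y\<in>B. f y) / real (card B)"

definition bmo_norm :: "'a set \<Rightarrow> ('a \<Rightarrow> 'a \<Rightarrow> real) \<Rightarrow> real \<Rightarrow> ('a \<Rightarrow> real) \<Rightarrow> ereal" where
  "bmo_norm X \<rho> p f =
     (SUP B\<in>adm_balls X \<rho>.
        ereal (((\<Sum>y\<in>B. \<bar>f y - avg f B\<bar> powr p) / real (card B)) powr (1 / p)))"

definition loc_int :: "'a set \<Rightarrow> ('a \<Rightarrow> 'a \<Rightarrow> real) \<Rightarrow> ('a \<Rightarrow> real) \<Rightarrow> bool" where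
  "loc_int X \<rho> f \<longleftrightarrow> (\<forall>x\<in>X. \<forall>r>0. integrable (count_space (oball X \<rho> x r)) f)"

definition BMO :: "'a set \<Rightarrow> ('a \<Rightarrow> 'a \<Rightarrow> real) \<Rightarrow> ('a \<Rightarrow> real) set" where
  "BMO X \<rho> = {f. loc_int X \<rho> f \<and> bmo_norm X \<rho> 1 f < \<infinity>}"

end

theory Submission
  imports Defs "HOL-Library.Nat_Bijection"
begin

text \<open>
  The space is a disjoint union of brooms: broom \<open>n\<close> is a hub carrying a handle, a path of
  \<open>n\<^sup>2\<close> edges, and \<open>3\<^sup>n\<close> bristles, each a single edge.  Within a broom we use the graph
  distance truncated at 2 and scaled by \<open>n + 2\<close>; distinct brooms are glued at their hubs.
  Then every finite ball is a singleton, lies inside the unit neighbourhood of a non-hub vertex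
  (at most four points), or is a whole broom.  A function of BMO norm \<open>N\<close> therefore changes by
  at most \<open>4N\<close> along every edge, so on a broom it deviates from its mean by at most
  \<open>4N (h + H)\<close>, where \<open>h\<close> is the distance to the hub and \<open>H\<close> bounds the mean of \<open>h\<close>.  As the
  handle carries only \<open>n\<^sup>2 + 1\<close> of the \<open>3\<^sup>n + n\<^sup>2 + 1\<close> points, every moment of \<open>h\<close> is bounded
  uniformly in \<open>n\<close>, which compares all \<open>BMO\<^sup>p\<close> norms.  The function \<open>h\<close> itself lies in BMO,
  but at the end of the handle it exceeds its mean by about \<open>n\<^sup>2\<close> on a set of relative size
  about \<open>3\<^sup>-\<^sup>n\<close>, which defeats every exponential decay \<open>exp (-c \<lambda>)\<close>.
\<close>

section \<open>Mean oscillation on finite sets\<close>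

definition mean_osc :: "real \<Rightarrow> ('a \<Rightarrow> real) \<Rightarrow> 'a set \<Rightarrow> real" where
  "mean_osc p f B = ((\<Sum>y\<in>B. \<bar>f y - avg f B\<bar> powr p) / real (card B)) powr (1 / p)"

lemma bmo_norm_eq_SUP_mean_osc:
  "bmo_norm X \<rho> p f = (SUP B\<in>adm_balls X \<rho>. ereal (mean_osc p f B))"
  by (simp add: bmo_norm_def mean_osc_def)

lemma mean_osc_1: "mean_osc 1 f B = (\<Sum>y\<in>B. \<bar>f y - avg f B\<bar>) / real (card B)"
  by (simp add: mean_osc_def sum_nonneg)

lemma mean_osc_singleton: "0 < p \<Longrightarrow> mean_osc p f {x} = 0"
  by (simp add: mean_osc_def avg_def)

lemma mean_osc_le_weighted:
  assumes fin: "finite B" and ne: "B \<noteq> {}" and p: "0 < p" and D: "0 \<le> D"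
    and w: "\<And>y. y \<in> B \<Longrightarrow> 0 \<le> w y"
    and dev: "\<And>y. y \<in> B \<Longrightarrow> \<bar>f y - avg f B\<bar> \<le> D * w y"
  shows "mean_osc p f B \<le> D * ((\<Sum>y\<in>B. w y powr p) / real (card B)) powr (1 / p)"
proof -
  have c: "0 < real (card B)" using fin ne by (simp add: card_gt_0_iff)
  have "(\<Sum>y\<in>B. \<bar>f y - avg f B\<bar> powr p) \<le> (\<Sum>y\<in>B. D powr p * w y powr p)"
  proof (rule sum_mono)
    fix y assume "y \<in> B"
    have "\<bar>f y - avg f B\<bar> powr p \<le> (D * w y) powr p"
      using dev[OF \<open>y \<in> B\<close>] p by (intro powr_mono2) auto
    then show "\<bar>f y - avg f B\<bar> powr p \<le> D powr p * w y powr p" by (simp add: powr_mult)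
  qed
  then have "(\<Sum>y\<in>B. \<bar>f y - avg f B\<bar> powr p) / real (card B)
      \<le> D powr p * ((\<Sum>y\<in>B. w y powr p) / real (card B))"
    using c by (simp add: sum_distrib_left divide_right_mono)
  then have "mean_osc p f B \<le> (D powr p * ((\<Sum>y\<in>B. w y powr p) / real (card B))) powr (1 / p)"
    unfolding mean_osc_def using p
    by (intro powr_mono2) (auto intro!: divide_nonneg_pos sum_nonneg c)
  also have "\<dots> = (D powr p) powr (1 / p) * ((\<Sum>y\<in>B. w y powr p) / real (card B)) powr (1 / p)"
    by (rule powr_mult)
  also have "(D powr p) powr (1 / p) = D" using p D by (simp add: powr_powr)
  finally show ?thesis .
qed

lemma mean_osc_le_const:
  assumes "finite B" "B \<noteq> {}" "0 < p" "0 \<le> D" "\<And>y. y \<in> B \<Longrightarrow> \<bar>f y - avg f B\<bar> \<le> D"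
  shows "mean_osc p f B \<le> D"
proof -
  have "mean_osc p f B \<le> D * ((\<Sum>y\<in>B. (1::real) powr p) / real (card B)) powr (1 / p)"
    using assms by (intro mean_osc_le_weighted) auto
  then show ?thesis using assms(1,2) by simp
qed

lemma abs_avg_diff_le:
  assumes fin: "finite B" and ne: "B \<noteq> {}" and dev: "\<And>y. y \<in> B \<Longrightarrow> \<bar>f y - c\<bar> \<le> w y"
  shows "\<bar>avg f B - c\<bar> \<le> avg w B"
proof -
  have cB: "0 < real (card B)" using fin ne by (simp add: card_gt_0_iff)
  have "avg f B - c = (\<Sum>y\<in>B. f y - c) / real (card B)"
    using cB by (simp add: avg_def sum_subtractf field_simps)
  then have "\<bar>avg f B - c\<bar> \<le> (\<Sum>y\<in>B. \<bar>f y - c\<bar>) / real (card B)"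
    using cB by (simp add: divide_right_mono sum_abs)
  also have "\<dots> \<le> avg w B"
    unfolding avg_def using cB dev by (intro divide_right_mono sum_mono) auto
  finally show ?thesis .
qed

lemma mean_osc_1_le_dev:
  assumes fin: "finite B" and ne: "B \<noteq> {}" and dev: "\<And>y. y \<in> B \<Longrightarrow> \<bar>f y - c\<bar> \<le> w y"
  shows "mean_osc 1 f B \<le> 2 * avg w B"
proof -
  have cB: "0 < real (card B)" using fin ne by (simp add: card_gt_0_iff)
  have avg: "\<bar>avg f B - c\<bar> \<le> avg w B" by (rule abs_avg_diff_le[OF fin ne dev])
  have "(\<Sum>y\<in>B. \<bar>f y - avg f B\<bar>) \<le> (\<Sum>y\<in>B. w y + avg w B)"
    using dev avg by (intro sum_mono) (smt (verit))
  also have "\<dots> = real (card B) * (2 * avg w B)"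
    using cB by (simp add: sum.distrib avg_def)
  finally show ?thesis using cB by (simp add: mean_osc_1 pos_divide_le_eq mult.commute)
qed

lemma sum_osc_le:
  assumes "finite B" "B \<noteq> {}" "mean_osc 1 f B \<le> N"
  shows "(\<Sum>y\<in>B. \<bar>f y - avg f B\<bar>) \<le> real (card B) * N"
  using assms by (simp add: mean_osc_1 card_gt_0_iff pos_divide_le_eq mult.commute)

lemma abs_dev_le_card_osc:
  assumes "finite B" "B \<noteq> {}" "mean_osc 1 f B \<le> N" "y \<in> B"
  shows "\<bar>f y - avg f B\<bar> \<le> real (card B) * N"
  using member_le_sum[of y B "\<lambda>y. \<bar>f y - avg f B\<bar>"] sum_osc_le[OF assms(1-3)] assms(1,4) by simp

lemma abs_diff_le_sum_osc:
  assumes "finite B" "x \<in> B" "y \<in> B"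
  shows "\<bar>f x - f y\<bar> \<le> (\<Sum>z\<in>B. \<bar>f z - avg f B\<bar>)"
proof (cases "x = y")
  case False
  have "\<bar>f x - f y\<bar> \<le> (\<Sum>z\<in>{x, y}. \<bar>f z - avg f B\<bar>)" using False by simp
  also have "\<dots> \<le> (\<Sum>z\<in>B. \<bar>f z - avg f B\<bar>)" using assms by (intro sum_mono2) auto
  finally show ?thesis .
qed (simp add: sum_nonneg)

lemma abs_diff_le_card_osc:
  assumes "finite B" "B \<noteq> {}" "mean_osc 1 f B \<le> N" "x \<in> B" "y \<in> B"
  shows "\<bar>f x - f y\<bar> \<le> real (card B) * N"
  using abs_diff_le_sum_osc[OF assms(1,4,5), where f = f] sum_osc_le[OF assms(1-3)] by linarith

section \<open>BMO on a metric measure space with counting measure\<close>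

lemma adm_ball_finite: "B \<in> adm_balls X \<rho> \<Longrightarrow> finite B"
  and adm_ball_nonempty: "B \<in> adm_balls X \<rho> \<Longrightarrow> B \<noteq> {}"
  by (auto simp: adm_balls_def)

lemma adm_ballI:
  "x \<in> X \<Longrightarrow> 0 < r \<Longrightarrow> oball X \<rho> x r = B \<Longrightarrow> finite B \<Longrightarrow> x \<in> B \<Longrightarrow> B \<in> adm_balls X \<rho>"
  by (auto simp: adm_balls_def)

lemma bmo_norm_le:
  "(\<And>B. B \<in> adm_balls X \<rho> \<Longrightarrow> mean_osc p f B \<le> M) \<Longrightarrow> bmo_norm X \<rho> p f \<le> ereal M"
  unfolding bmo_norm_eq_SUP_mean_osc by (rule SUP_least) simp

lemma BMOI:
  assumes "loc_int X \<rho> f" "\<And>B. B \<in> adm_balls X \<rho> \<Longrightarrow> mean_osc 1 f B \<le> M"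
  shows "f \<in> BMO X \<rho>"
  using assms bmo_norm_le[of X \<rho> 1 f M] by (auto simp: BMO_def order.strict_trans1)

lemma BMO_normE:
  assumes f: "f \<in> BMO X \<rho>" and B0: "B0 \<in> adm_balls X \<rho>"
  obtains N where "0 \<le> N" "bmo_norm X \<rho> 1 f = ereal N"
    "\<And>B. B \<in> adm_balls X \<rho> \<Longrightarrow> mean_osc 1 f B \<le> N"
proof -
  let ?S = "bmo_norm X \<rho> 1 f"
  have up: "ereal (mean_osc 1 f B) \<le> ?S" if "B \<in> adm_balls X \<rho>" for B
    unfolding bmo_norm_eq_SUP_mean_osc using that by (rule SUP_upper)
  have "0 \<le> ?S" using up[OF B0] by (rule order_trans[rotated]) (simp add: mean_osc_def)
  moreover have "?S < \<infinity>" using f by (simp add: BMO_def)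
  ultimately obtain N where "?S = ereal N" "0 \<le> N" by (cases ?S) auto
  with up show ?thesis using that by force
qed

lemma bmo_norm_pos:
  assumes f: "f \<in> BMO X \<rho>" and B: "B \<in> adm_balls X \<rho>" and x: "x \<in> B" "f x \<noteq> avg f B"
  shows "0 < real_of_ereal (bmo_norm X \<rho> 1 f)"
proof -
  obtain N where N: "bmo_norm X \<rho> 1 f = ereal N" "\<And>B. B \<in> adm_balls X \<rho> \<Longrightarrow> mean_osc 1 f B \<le> N"
    using BMO_normE[OF f B] by metis
  have "0 < \<bar>f x - avg f B\<bar>" using x by simp
  also have "\<dots> \<le> (\<Sum>y\<in>B. \<bar>f y - avg f B\<bar>)"
    using x adm_ball_finite[OF B] by (intro member_le_sum) auto
  finally have "0 < mean_osc 1 f B"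
    using adm_ball_finite[OF B] adm_ball_nonempty[OF B] by (simp add: mean_osc_1 card_gt_0_iff)
  then show ?thesis using N B by fastforce
qed

text \<open>Take \<open>l \<ge> max c\<^sub>1 (\<parallel>g\<parallel>\<^sub>* / c\<^sub>2)\<close> in the tail hypothesis.\<close>

lemma no_John_Nirenberg:
  assumes g: "g \<in> BMO X \<rho>"
    and tail: "\<forall>l::nat. l \<ge> 1 \<longrightarrow>
       (\<exists>B\<in>adm_balls X \<rho>. \<exists>lam::real. lam > 0 \<and>
          real (card {x\<in>B. \<bar>g x - avg g B\<bar> > lam}) / real (card B)
            > real l * exp (- lam / real l))"
  shows "\<not> (\<exists>c1 c2 :: real. c1 > 0 \<and> c2 > 0 \<and>
       (\<forall>f\<in>BMO X \<rho>. \<forall>B\<in>adm_balls X \<rho>. \<forall>lam::real. lam > 0 \<longrightarrow>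
          real (card {x\<in>B. \<bar>f x - avg f B\<bar> > lam}) / real (card B)
            \<le> c1 * exp (- c2 * lam / real_of_ereal (bmo_norm X \<rho> 1 f))))"
proof
  assume "\<exists>c1 c2 :: real. c1 > 0 \<and> c2 > 0 \<and>
       (\<forall>f\<in>BMO X \<rho>. \<forall>B\<in>adm_balls X \<rho>. \<forall>lam::real. lam > 0 \<longrightarrow>
          real (card {x\<in>B. \<bar>f x - avg f B\<bar> > lam}) / real (card B)
            \<le> c1 * exp (- c2 * lam / real_of_ereal (bmo_norm X \<rho> 1 f)))"
  then obtain c1 c2 :: real where c: "c1 > 0" "c2 > 0" and
    JN: "\<And>B lam. B \<in> adm_balls X \<rho> \<Longrightarrow> lam > 0 \<Longrightarrow>
          real (card {x\<in>B. \<bar>g x - avg g B\<bar> > lam}) / real (card B)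
            \<le> c1 * exp (- c2 * lam / real_of_ereal (bmo_norm X \<rho> 1 g))"
    using g by blast
  define G where "G = real_of_ereal (bmo_norm X \<rho> 1 g)"
  have "0 < G"
  proof -
    obtain B lam where B: "B \<in> adm_balls X \<rho>" "lam > 0"
      and "real (card {x\<in>B. \<bar>g x - avg g B\<bar> > lam}) / real (card B) > real (1::nat) * exp (- lam)"
      using tail by fastforce
    then have "{x\<in>B. \<bar>g x - avg g B\<bar> > lam} \<noteq> {}"
      by (metis card.empty div_0 exp_gt_zero mult_1 not_less_iff_gr_or_eq of_nat_0 of_nat_1)
    then obtain x where "x \<in> B" "\<bar>g x - avg g B\<bar> > lam" by blast
    then show ?thesis unfolding G_def using bmo_norm_pos[OF g B(1)] B(2) by fastforce
  qed
  define l where "l = nat (max \<lceil>c1\<rceil> \<lceil>G / c2\<rceil>) + 1"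
  have l: "1 \<le> l" "c1 \<le> real l" "G / c2 \<le> real l"
    unfolding l_def by linarith+
  obtain B lam where B: "B \<in> adm_balls X \<rho>" "lam > 0"
    and big: "real (card {x\<in>B. \<bar>g x - avg g B\<bar> > lam}) / real (card B)
      > real l * exp (- lam / real l)"
    using tail l(1) by blast
  have "lam / real l \<le> c2 * lam / G"
    using l(3) c(2) \<open>0 < G\<close> B(2) l(1) by (simp add: field_simps mult_left_mono)
  then have "c1 * exp (- c2 * lam / G) \<le> real l * exp (- lam / real l)"
    using l(2) c by (intro mult_mono) auto
  then show False using big JN[OF B] unfolding G_def by linarith
qed

lemma integrable_count_space_finite_support:
  fixes f :: "'a \<Rightarrow> real"
  assumes "finite F" "\<And>x. x \<in> A - F \<Longrightarrow> f x = 0"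
  shows "integrable (count_space A) f"
  using abs_summable_on_cong_neutral[of A "A \<inter> F" f f] assms abs_summable_on_finite[of "A \<inter> F" f]
  unfolding abs_summable_on_def by auto

section \<open>Metrics glued at base points\<close>

text \<open>\<open>h x\<close> plays the role of the distance from \<open>x\<close> to the base point of its component.\<close>

definition glued :: "('a \<Rightarrow> 'b) \<Rightarrow> ('a \<Rightarrow> 'a \<Rightarrow> real) \<Rightarrow> ('a \<Rightarrow> real) \<Rightarrow> 'a \<Rightarrow> 'a \<Rightarrow> real" where
  "glued cpt d h x y = (if cpt x = cpt y then d x y else h x + h y + 1)"

lemma metric_on_glued:
  assumes d: "\<And>x y. cpt x = cpt y \<Longrightarrow> 0 \<le> d x y \<and> d x y = d y x \<and> (d x y = 0 \<longleftrightarrow> x = y)"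
    and tri: "\<And>x y z. cpt x = cpt y \<Longrightarrow> cpt y = cpt z \<Longrightarrow> d x z \<le> d x y + d y z"
    and base1: "\<And>x y. cpt x = cpt y \<Longrightarrow> h x \<le> d x y + h y"
    and base2: "\<And>x y. cpt x = cpt y \<Longrightarrow> d x y \<le> h x + h y"
    and h: "\<And>x. 0 \<le> h x"
  shows "metric_on X (glued cpt d h)"
  unfolding metric_on_def
proof (intro conjI ballI)
  fix x y z
  show "0 \<le> glued cpt d h x y" "glued cpt d h x y = 0 \<longleftrightarrow> x = y"
    "glued cpt d h x y = glued cpt d h y x"
    using d[of x y] d[of y x] h[of x] h[of y] by (auto simp: glued_def)
  show "glued cpt d h x z \<le> glued cpt d h x y + glued cpt d h y z"
    using tri[of x y z] base1[of x y] base1[of z y] base2[of x z] d[of z y] h[of x] h[of y] h[of z]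
    by (auto simp: glued_def)
qed

section \<open>Brooms\<close>

definition handle_len :: "nat \<Rightarrow> nat" where "handle_len n = n\<^sup>2"

definition broom_size :: "nat \<Rightarrow> nat" where "broom_size n = Suc (handle_len n + 3 ^ n)"

text \<open>In broom \<open>n\<close>, vertex 0 is the hub, vertices \<open>1..n\<^sup>2\<close> form the handle and the remaining
  ones are bristles.\<close>

definition node :: "nat \<Rightarrow> nat \<Rightarrow> nat" where "node n k = prod_encode (n, k)"
definition broom_of :: "nat \<Rightarrow> nat" where "broom_of p = fst (prod_decode p)"
definition vertex_of :: "nat \<Rightarrow> nat" where "vertex_of p = snd (prod_decode p)"

definition Xb :: "nat set" where "Xb = {p. vertex_of p < broom_size (broom_of p)}"
definition broom :: "nat \<Rightarrow> nat set" where "broom n = {p \<in> Xb. broom_of p = n}"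

definition broom_edge :: "nat \<Rightarrow> nat \<Rightarrow> nat \<Rightarrow> bool" where
  "broom_edge n k j \<longleftrightarrow> (j = Suc k \<and> j \<le> handle_len n) \<or> (k = Suc j \<and> k \<le> handle_len n)
     \<or> (k = 0 \<and> handle_len n < j) \<or> (j = 0 \<and> handle_len n < k)"

definition trunc_dist :: "nat \<Rightarrow> nat \<Rightarrow> nat \<Rightarrow> real" where
  "trunc_dist n k j = (if k = j then 0 else if broom_edge n k j then 1 else 2)"

definition stretch :: "nat \<Rightarrow> real" where "stretch n = real n + 2"

definition hub_dist :: "nat \<Rightarrow> real" where "hub_dist p = trunc_dist (broom_of p) (vertex_of p) 0"

text \<open>The growing stretch makes every ball meeting two brooms infinite, while a ball of radius
  \<open>r\<close> contains non-hub points of only those brooms \<open>n\<close> with \<open>n + 2 < r\<close>.\<close>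

definition broom_dist :: "nat \<Rightarrow> nat \<Rightarrow> real" where
  "broom_dist p q = stretch (broom_of p) * trunc_dist (broom_of p) (vertex_of p) (vertex_of q)"

definition rho :: "nat \<Rightarrow> nat \<Rightarrow> real" where
  "rho = glued broom_of broom_dist (\<lambda>p. stretch (broom_of p) * hub_dist p)"

definition depth :: "nat \<Rightarrow> nat \<Rightarrow> real" where
  "depth n k = (if k \<le> handle_len n then real k else 1)"

definition height :: "nat \<Rightarrow> real" where "height p = depth (broom_of p) (vertex_of p)"

definition nbhd :: "nat \<Rightarrow> nat set" where
  "nbhd x =
    {y \<in> Xb. broom_of y = broom_of x \<and> trunc_dist (broom_of x) (vertex_of x) (vertex_of y) \<le> 1}"

lemma broom_of_node [simp]: "broom_of (node n k) = n"
  and vertex_of_node [simp]: "vertex_of (node n k) = k"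
  by (simp_all add: broom_of_def vertex_of_def node_def)

lemma node_broom_of_vertex_of [simp]: "node (broom_of p) (vertex_of p) = p"
  by (simp add: broom_of_def vertex_of_def node_def)

lemma node_eq_iff [simp]: "node n k = node m j \<longleftrightarrow> n = m \<and> k = j"
  by (metis broom_of_node vertex_of_node)

lemma point_eqI: "broom_of p = broom_of q \<Longrightarrow> vertex_of p = vertex_of q \<Longrightarrow> p = q"
  by (metis node_broom_of_vertex_of)

lemma node_in_Xb: "k < broom_size n \<Longrightarrow> node n k \<in> Xb"
  by (simp add: Xb_def)

lemma broom_eq_image: "broom n = node n ` {..<broom_size n}"
  unfolding broom_def Xb_def by (auto, metis image_eqI lessThan_iff node_broom_of_vertex_of)

lemma inj_node: "inj (node n)"
  by (metis injI vertex_of_node)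

lemma finite_broom: "finite (broom n)"
  by (simp add: broom_eq_image)

lemma broom_nonempty: "broom n \<noteq> {}"
  by (auto simp: broom_eq_image broom_size_def)

lemma card_broom: "card (broom n) = broom_size n"
  by (simp add: broom_eq_image card_image inj_on_subset[OF inj_node])

lemma broom_size_pos: "0 < real (broom_size n)"
  unfolding broom_size_def by (simp only: of_nat_0_less_iff zero_less_Suc)

lemma sum_broom: "(\<Sum>y\<in>broom n. F y) = (\<Sum>k<broom_size n. F (node n k))"
  by (simp add: broom_eq_image sum.reindex inj_on_subset[OF inj_node])

lemma avg_broom: "avg F (broom n) = (\<Sum>k<broom_size n. F (node n k)) / real (broom_size n)"
  by (simp add: avg_def sum_broom card_broom)

lemma trunc_dist_cases: "trunc_dist n k j = 0 \<or> trunc_dist n k j = 1 \<or> trunc_dist n k j = 2"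
  by (simp add: trunc_dist_def)

lemma trunc_dist_sym: "trunc_dist n k j = trunc_dist n j k"
  unfolding trunc_dist_def broom_edge_def by auto

lemma trunc_dist_eq_0_iff [simp]: "trunc_dist n k j = 0 \<longleftrightarrow> k = j"
  and trunc_dist_self [simp]: "trunc_dist n k k = 0"
  by (simp_all add: trunc_dist_def)

lemma trunc_dist_bounds: "0 \<le> trunc_dist n k j" "trunc_dist n k j \<le> 2"
  "k \<noteq> j \<Longrightarrow> 1 \<le> trunc_dist n k j"
  by (auto simp: trunc_dist_def)

text \<open>Any distance with values in \<open>{0} \<union> [1, 2]\<close> satisfies the triangle inequality.\<close>

lemma trunc_dist_triangle: "trunc_dist n k j \<le> trunc_dist n k i + trunc_dist n i j"
proof (cases "k = j \<or> i = k \<or> i = j")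
  case True
  then show ?thesis using trunc_dist_bounds(1)[of n k i] trunc_dist_bounds(1)[of n i j] by auto
next
  case False
  then show ?thesis
    using trunc_dist_bounds(2)[of n k j] trunc_dist_bounds(3)[of k i n] trunc_dist_bounds(3)[of i j n]
    by auto
qed

lemma stretch_ge_2: "2 \<le> stretch n"
  by (simp add: stretch_def)

lemma hub_dist_nonneg: "0 \<le> hub_dist p"
  by (simp add: hub_dist_def trunc_dist_bounds)

lemma rho_same: "broom_of p = broom_of q \<Longrightarrow> rho p q = broom_dist p q"
  and rho_other:
  "broom_of p \<noteq> broom_of q \<Longrightarrow>
    rho p q = stretch (broom_of p) * hub_dist p + stretch (broom_of q) * hub_dist q + 1"
  by (simp_all add: rho_def glued_def)

lemma broom_dist_basic:
  assumes "broom_of x = broom_of y"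
  shows "0 \<le> broom_dist x y \<and> broom_dist x y = broom_dist y x \<and> (broom_dist x y = 0 \<longleftrightarrow> x = y)"
  using assms stretch_ge_2[of "broom_of x"]
  by (auto simp: broom_dist_def trunc_dist_bounds trunc_dist_sym intro: point_eqI)

lemma broom_dist_triangle:
  assumes "broom_of x = broom_of y" "broom_of y = broom_of z"
  shows "broom_dist x z \<le> broom_dist x y + broom_dist y z"
  using assms stretch_ge_2[of "broom_of x"]
    mult_left_mono[OF trunc_dist_triangle, of "stretch (broom_of x)" "broom_of x" "vertex_of x"]
  by (simp add: broom_dist_def distrib_left)

lemma metric_on_Xb: "metric_on Xb rho"
  unfolding rho_def
proof (rule metric_on_glued)
  let ?hub = "\<lambda>p. node (broom_of p) 0"
  have hub: "stretch (broom_of p) * hub_dist p = broom_dist p (?hub p)" for p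
    by (simp add: broom_dist_def hub_dist_def)
  fix x y z assume xy: "broom_of x = broom_of y"
  then show "0 \<le> broom_dist x y \<and> broom_dist x y = broom_dist y x \<and> (broom_dist x y = 0 \<longleftrightarrow> x = y)"
    by (rule broom_dist_basic)
  show "stretch (broom_of x) * hub_dist x \<le> broom_dist x y + stretch (broom_of y) * hub_dist y"
    unfolding hub using broom_dist_triangle[of x y "?hub y"] xy by simp
  show "broom_dist x y \<le> stretch (broom_of x) * hub_dist x + stretch (broom_of y) * hub_dist y"
    unfolding hub using broom_dist_triangle[of x "?hub x" y] broom_dist_basic[of "?hub y" y] xy
    by simp
  assume "broom_of y = broom_of z"
  with xy show "broom_dist x z \<le> broom_dist x y + broom_dist y z" by (rule broom_dist_triangle)
next
  show "0 \<le> stretch (broom_of x) * hub_dist x" for x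
    using stretch_ge_2[of "broom_of x"] hub_dist_nonneg[of x] by simp
qed

lemma oball_infinite:
  assumes "r > 1 + stretch (broom_of x) * hub_dist x"
  shows "infinite (oball Xb rho x r)"
proof
  assume fin: "finite (oball Xb rho x r)"
  have "(\<lambda>m. node m 0) ` (UNIV - {broom_of x}) \<subseteq> oball Xb rho x r"
    using assms by (auto simp: oball_def node_in_Xb broom_size_def rho_other hub_dist_def)
  then have "finite ((\<lambda>m. node m 0) ` (UNIV - {broom_of x}))"
    using fin finite_subset by blast
  then have "finite (UNIV - {broom_of x})"
    by (rule finite_imageD) (auto simp: inj_on_def)
  then show False by simp
qed

lemma oball_within_broom:
  assumes "r \<le> 1 + stretch (broom_of x) * hub_dist x"
  shows "oball Xb rho x r = {y \<in> broom (broom_of x). broom_dist x y < r}" (is "_ = ?R")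
proof -
  have same: "broom_of y = broom_of x" if "rho x y < r" for y
  proof (rule ccontr)
    assume "broom_of y \<noteq> broom_of x"
    moreover have "0 \<le> stretch (broom_of y) * hub_dist y"
      using stretch_ge_2[of "broom_of y"] hub_dist_nonneg[of y] by simp
    ultimately show False using that assms by (simp add: rho_other)
  qed
  show ?thesis
  proof (intro set_eqI iffI)
    fix y assume "y \<in> oball Xb rho x r"
    then show "y \<in> ?R" using same[of y] rho_same[of x y] by (auto simp: oball_def broom_def)
  next
    fix y assume "y \<in> ?R"
    then show "y \<in> oball Xb rho x r" using rho_same[of x y] by (auto simp: oball_def broom_def)
  qed
qed

lemma adm_ball_in_broom:
  assumes "B \<in> adm_balls Xb rho"
  obtains x r where "x \<in> B" "r \<le> 1 + stretch (broom_of x) * hub_dist x"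
    "B = {y \<in> broom (broom_of x). broom_dist x y < r}"
proof -
  obtain x r where x: "x \<in> Xb" "r > 0" "B = oball Xb rho x r" and fin: "finite B"
    using assms by (auto simp: adm_balls_def)
  have r: "r \<le> 1 + stretch (broom_of x) * hub_dist x" using oball_infinite fin x(3) by force
  then have "x \<in> B" using x by (simp add: oball_within_broom broom_def broom_dist_def)
  then show ?thesis using that r oball_within_broom[OF r] x(3) by blast
qed

lemma adm_ball_cases:
  assumes "B \<in> adm_balls Xb rho"
  obtains (singleton) x where "B = {x}"
    | (small) x where "x \<in> B" "vertex_of x \<noteq> 0" "B \<subseteq> nbhd x"
    | (whole) n where "B = broom n"
proof -
  obtain x r where xB: "x \<in> B" and r: "r \<le> 1 + stretch (broom_of x) * hub_dist x"
    and B_eq: "B = {y \<in> broom (broom_of x). broom_dist x y < r}"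
    using adm_ball_in_broom[OF assms] by blast
  let ?n = "broom_of x" and ?s = "stretch (broom_of x)"
  let ?d = "\<lambda>y. trunc_dist ?n (vertex_of x) (vertex_of y)"
  have B: "B = {y \<in> broom ?n. ?s * ?d y < r}" using B_eq by (simp add: broom_dist_def)
  have s: "2 \<le> ?s" by (rule stretch_ge_2)
  consider "r \<le> ?s" | "?s < r" "r \<le> 2 * ?s" | "2 * ?s < r" by linarith
  then show ?thesis
  proof cases
    case 1
    have "B \<subseteq> {x}"
    proof
      fix y assume "y \<in> B"
      then have "?s * ?d y < ?s * 1" "broom_of y = ?n" using 1 B by (auto simp: broom_def)
      then have "?d y < 1" using s by simp
      then have "vertex_of y = vertex_of x"
        using trunc_dist_cases[of ?n "vertex_of x" "vertex_of y"] by auto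
      then show "y \<in> {x}" using \<open>broom_of y = ?n\<close> by (simp add: point_eqI)
    qed
    then show ?thesis using xB that(1) by blast
  next
    case 2
    have "vertex_of x \<noteq> 0"
      using 2 r s by (cases "vertex_of x = 0") (auto simp: hub_dist_def)
    moreover have "B \<subseteq> nbhd x"
    proof
      fix y assume "y \<in> B"
      then have "?s * ?d y < r" "y \<in> broom ?n" using B by auto
      then have "?s * ?d y < ?s * 2" using 2 by linarith
      then have "?d y < 2" using s by simp
      then have "?d y \<le> 1" using trunc_dist_cases[of ?n "vertex_of x" "vertex_of y"] by auto
      then show "y \<in> nbhd x" using \<open>y \<in> broom ?n\<close> by (simp add: nbhd_def broom_def)
    qed
    ultimately show ?thesis using xB that(2) by blast
  next
    case 3
    have "?s * ?d y < r" for y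
    proof -
      have "?s * ?d y \<le> ?s * 2" using s by (intro mult_left_mono trunc_dist_bounds) auto
      then show ?thesis using 3 by linarith
    qed
    then have "B = broom ?n" using B by auto
    then show ?thesis using that(3) by blast
  qed
qed

lemma nbhd_subset:
  "vertex_of x \<noteq> 0 \<Longrightarrow>
    nbhd x \<subseteq> node (broom_of x) ` {0, vertex_of x - 1, vertex_of x, Suc (vertex_of x)}"
  unfolding nbhd_def
  by (auto simp: trunc_dist_def broom_edge_def split: if_splits)
     (metis image_eqI insertCI node_broom_of_vertex_of)+

lemma card_nbhd:
  assumes "vertex_of x \<noteq> 0"
  shows "finite (nbhd x)" "card (nbhd x) \<le> 4"
proof -
  let ?V = "{0, vertex_of x - 1, vertex_of x, Suc (vertex_of x)}"
  show "finite (nbhd x)" using nbhd_subset[OF assms] finite_subset by blast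
  have "card (nbhd x) \<le> card (node (broom_of x) ` ?V)"
    using nbhd_subset[OF assms] by (intro card_mono) auto
  also have "\<dots> \<le> card ?V" by (rule card_image_le) simp
  also have "\<dots> \<le> 4" by (simp add: card_insert_if)
  finally show "card (nbhd x) \<le> 4" .
qed

lemma nbhd_adm_ball:
  assumes x: "x \<in> Xb" "vertex_of x \<noteq> 0"
  shows "nbhd x \<in> adm_balls Xb rho"
proof (rule adm_ballI[OF x(1)])
  let ?n = "broom_of x" and ?s = "stretch (broom_of x)"
  have s: "2 \<le> ?s" by (rule stretch_ge_2)
  have "1 \<le> hub_dist x" using x(2) by (simp add: hub_dist_def trunc_dist_bounds)
  then have "?s * 1 \<le> ?s * hub_dist x" using s by (intro mult_left_mono) auto
  then have "?s + 1/2 \<le> 1 + ?s * hub_dist x" by simp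
  moreover have "?s * trunc_dist ?n (vertex_of x) k < ?s + 1/2 \<longleftrightarrow> trunc_dist ?n (vertex_of x) k \<le> 1"
    for k
    using trunc_dist_cases[of ?n "vertex_of x" k] s by auto
  ultimately show "oball Xb rho x (?s + 1/2) = nbhd x"
    by (simp add: oball_within_broom broom_dist_def) (auto simp: nbhd_def broom_def)
  show "0 < ?s + 1/2" using s by simp
  show "finite (nbhd x)" using card_nbhd[OF x(2)] by simp
  show "x \<in> nbhd x" using x(1) by (simp add: nbhd_def)
qed

lemma broom_adm_ball:
  assumes "2 \<le> n"
  shows "broom n \<in> adm_balls Xb rho"
proof (rule adm_ballI)
  have L: "2 \<le> handle_len n"
    using mult_le_mono[OF assms assms] by (simp add: handle_len_def power2_eq_square)
  let ?x = "node n 2"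
  show x: "?x \<in> Xb" using L by (simp add: node_in_Xb broom_size_def)
  have s: "2 \<le> stretch n" by (rule stretch_ge_2)
  have "hub_dist ?x = 2" using L by (simp add: hub_dist_def trunc_dist_def broom_edge_def)
  then have "2 * stretch n + 1/2 \<le> 1 + stretch (broom_of ?x) * hub_dist ?x" by simp
  moreover have "stretch n * trunc_dist n 2 k < 2 * stretch n + 1/2" for k
    using s mult_left_mono[OF trunc_dist_bounds(2)[of n 2 k], of "stretch n"] by linarith
  ultimately show "oball Xb rho ?x (2 * stretch n + 1/2) = broom n"
    by (simp add: oball_within_broom broom_dist_def)
  show "0 < 2 * stretch n + 1/2" using s by simp
  show "finite (broom n)" by (rule finite_broom)
  show "?x \<in> broom n" using x by (simp add: broom_def)
qed

lemma depth_nonneg: "0 \<le> depth n k"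
  by (simp add: depth_def)

lemma height_nonneg: "0 \<le> height p"
  by (simp add: height_def depth_nonneg)

lemma avg_height_nonneg: "0 \<le> avg height (broom n)"
  by (simp add: avg_def sum_nonneg height_nonneg)

lemma height_nbhd: "y \<in> nbhd x \<Longrightarrow> \<bar>height y - height x\<bar> \<le> 1"
  by (auto simp: nbhd_def trunc_dist_def broom_edge_def height_def depth_def split: if_splits)

lemma broom_parent:
  assumes "0 < k" "k < broom_size n"
  obtains j where "j < k" "node n j \<in> nbhd (node n k)" "depth n k = depth n j + 1"
proof -
  let ?j = "if k \<le> handle_len n then k - 1 else 0"
  have j: "?j < k" using assms(1) by simp
  have "broom_edge n k ?j" using assms(1) by (auto simp: broom_edge_def)
  then have "node n ?j \<in> nbhd (node n k)"
    using j assms(2) by (simp add: nbhd_def node_in_Xb trunc_dist_def)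
  moreover have "depth n k = depth n ?j + 1" using assms(1) by (auto simp: depth_def)
  ultimately show ?thesis using j that by blast
qed

context
  fixes f :: "nat \<Rightarrow> real" and N :: real
  assumes osc: "\<And>B. B \<in> adm_balls Xb rho \<Longrightarrow> mean_osc 1 f B \<le> N" and N: "0 \<le> N"
begin

lemma osc_nbhd_le:
  assumes x: "x \<in> Xb" "vertex_of x \<noteq> 0" and yz: "y \<in> nbhd x" "z \<in> nbhd x"
  shows "\<bar>f y - f z\<bar> \<le> 4 * N"
proof -
  have B: "nbhd x \<in> adm_balls Xb rho" by (rule nbhd_adm_ball[OF x])
  have "\<bar>f y - f z\<bar> \<le> real (card (nbhd x)) * N"
    by (rule abs_diff_le_card_osc[OF adm_ball_finite[OF B] adm_ball_nonempty[OF B] osc[OF B] yz])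
  also have "\<dots> \<le> 4 * N" using card_nbhd[OF x(2)] N by (intro mult_right_mono) auto
  finally show ?thesis .
qed

lemma broom_chain: "k < broom_size n \<Longrightarrow> \<bar>f (node n k) - f (node n 0)\<bar> \<le> 4 * N * depth n k"
proof (induction k rule: less_induct)
  case (less k)
  show ?case
  proof (cases "k = 0")
    case True
    then show ?thesis by (simp add: depth_def)
  next
    case False
    then obtain j where j: "j < k" "node n j \<in> nbhd (node n k)" "depth n k = depth n j + 1"
      using broom_parent less.prems by blast
    have k: "node n k \<in> Xb" "node n k \<in> nbhd (node n k)"
      using less.prems by (simp_all add: nbhd_def node_in_Xb)
    have "\<bar>f (node n k) - f (node n j)\<bar> \<le> 4 * N"
      using osc_nbhd_le[OF k(1) _ k(2) j(2)] False by simp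
    moreover have "\<bar>f (node n j) - f (node n 0)\<bar> \<le> 4 * N * depth n j"
      using less.IH j(1) less.prems by simp
    ultimately show ?thesis using j(3) by (simp add: distrib_left abs_le_iff)
  qed
qed

lemma broom_dev:
  assumes H: "avg height (broom n) \<le> H" and y: "y \<in> broom n"
  shows "\<bar>f y - avg f (broom n)\<bar> \<le> 4 * N * (height y + H)"
proof -
  have dev: "\<bar>f y - f (node n 0)\<bar> \<le> 4 * N * height y" if "y \<in> broom n" for y
    using that broom_chain[of "vertex_of y" n] by (auto simp: broom_def Xb_def height_def)
  have "\<bar>avg f (broom n) - f (node n 0)\<bar> \<le> avg (\<lambda>y. 4 * N * height y) (broom n)"
    using dev by (rule abs_avg_diff_le[OF finite_broom broom_nonempty])
  also have "\<dots> = 4 * N * avg height (broom n)" by (simp add: avg_def sum_distrib_left)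
  also have "\<dots> \<le> 4 * N * H" using N H by (intro mult_left_mono) auto
  finally show ?thesis using dev[OF y] by (simp add: distrib_left abs_le_iff)
qed

end

lemma poly_le_exp3:
  obtains C :: real where "\<And>n::nat. real (n + 1) ^ k \<le> C * 3 ^ n"
proof -
  have "(\<lambda>n. real n ^ k / exp (real n)) \<longlonglongrightarrow> 0"
    by (rule filterlim_compose[OF tendsto_power_div_exp_0 filterlim_real_sequentially])
  then have "Bseq (\<lambda>n. real n ^ k / exp (real n))"
    by (intro convergent_imp_Bseq convergentI)
  then obtain C where C: "\<And>n. norm (real n ^ k / exp (real n)) \<le> C"
    by (rule BseqE) blast
  have "real (n + 1) ^ k \<le> (3 * C) * 3 ^ n" for n
  proof -
    have "real (n + 1) ^ k \<le> C * exp (real (n + 1))"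
      using C[of "n + 1"] by (simp add: divide_le_eq)
    also have "exp (real (n + 1)) = exp 1 ^ (n + 1)"
      using exp_of_nat_mult[of "n + 1" 1] by simp
    also have "C * \<dots> \<le> C * 3 ^ (n + 1)"
      using exp_le order_trans[OF norm_ge_zero C] by (intro mult_left_mono power_mono) auto
    finally show ?thesis by simp
  qed
  then show ?thesis using that by blast
qed

lemma sum_handle_indicator:
  "(\<Sum>k<broom_size n. if k \<le> handle_len n then a else 0) = real (handle_len n + 1) * a"
proof -
  have "{k \<in> {..<broom_size n}. k \<le> handle_len n} = {..handle_len n}"
    by (auto simp: broom_size_def)
  then show ?thesis by (simp flip: sum.inter_filter)
qed

lemma handle_weight_le:
  assumes C: "\<And>n. real (n + 1) ^ (2 * q + 2) \<le> C * 3 ^ n" and c: "0 \<le> c"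
  shows "real (handle_len n + 1) * ((1 + c) * real (n + 1) ^ 2) ^ q
    \<le> (1 + c) ^ q * C * real (broom_size n)"
proof -
  have C0: "0 \<le> C" using C[of 0] by simp
  have "real (handle_len n + 1) \<le> real (n + 1) ^ 2"
    by (simp add: handle_len_def power2_eq_square algebra_simps)
  then have "real (handle_len n + 1) * ((1 + c) * real (n + 1) ^ 2) ^ q
      \<le> real (n + 1) ^ 2 * ((1 + c) * real (n + 1) ^ 2) ^ q"
    using c by (intro mult_right_mono) auto
  also have "\<dots> = (1 + c) ^ q * real (n + 1) ^ (2 * q + 2)"
  proof -
    have "real (n + 1) ^ (2 * q + 2) = real (n + 1) ^ 2 * (real (n + 1) ^ 2) ^ q"
      by (metis mult.commute power_add power_mult)
    then show ?thesis by (simp add: power_mult_distrib mult_ac)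
  qed
  also have "\<dots> \<le> (1 + c) ^ q * (C * 3 ^ n)" using C c by (intro mult_left_mono) auto
  also have "\<dots> \<le> (1 + c) ^ q * (C * real (broom_size n))"
    using C0 c by (intro mult_left_mono) (auto simp: broom_size_def)
  finally show ?thesis by (simp add: mult.assoc)
qed

lemma depth_moment_bounded:
  assumes p: "0 < p" and c: "0 \<le> c"
  obtains K where "\<And>n. (\<Sum>k<broom_size n. (depth n k + c) powr p) / real (broom_size n) \<le> K"
proof -
  define q where "q = nat \<lceil>p\<rceil>"
  have pq: "p \<le> real q" unfolding q_def by linarith
  obtain C where C: "\<And>n. real (n + 1) ^ (2 * q + 2) \<le> C * 3 ^ n"
    by (rule poly_le_exp3[where k = "2 * q + 2"]) blast
  have "(\<Sum>k<broom_size n. (depth n k + c) powr p) / real (broom_size n)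
      \<le> (1 + c) powr p + (1 + c) ^ q * C" for n
  proof -
    define Y where "Y = (1 + c) * real (n + 1) ^ 2"
    have Y: "1 \<le> Y" unfolding Y_def using c mult_mono[of 1 "1 + c" 1 "real (n + 1) ^ 2"] by simp
    have L: "real (handle_len n) + 1 \<le> real (n + 1) ^ 2"
      by (simp add: handle_len_def power2_eq_square algebra_simps)
    have pointwise:
      "(depth n k + c) powr p \<le> (1 + c) powr p + (if k \<le> handle_len n then Y ^ q else 0)" for k
    proof (cases "k \<le> handle_len n")
      case True
      have "c \<le> c * real (n + 1) ^ 2" using c by (simp add: mult_le_cancel_left1)
      then have "depth n k + c \<le> Y" using True L by (simp add: Y_def depth_def algebra_simps)
      then have "(depth n k + c) powr p \<le> Y powr p"
        using p c depth_nonneg by (intro powr_mono2) auto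
      also have "\<dots> \<le> Y powr real q" using Y pq by (intro powr_mono) auto
      also have "\<dots> = Y ^ q" using Y by (simp add: powr_realpow)
      finally show ?thesis using True by (simp add: add_increasing)
    qed (simp add: depth_def)
    have handle: "real (handle_len n + 1) * Y ^ q \<le> (1 + c) ^ q * C * real (broom_size n)"
      unfolding Y_def using C c by (rule handle_weight_le)
    have "(\<Sum>k<broom_size n. (depth n k + c) powr p)
        \<le> (\<Sum>k<broom_size n. (1 + c) powr p + (if k \<le> handle_len n then Y ^ q else 0))"
      by (rule sum_mono) (rule pointwise)
    also have "\<dots> = real (broom_size n) * (1 + c) powr p + real (handle_len n + 1) * Y ^ q"
      by (simp add: sum.distrib sum_handle_indicator)
    finally show ?thesis
      using handle broom_size_pos[of n] by (simp add: pos_divide_le_eq algebra_simps)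
  qed
  then show ?thesis using that by blast
qed

lemma avg_height_bounded:
  obtains H where "0 \<le> H" "\<And>n. avg height (broom n) \<le> H"
proof -
  obtain K where K: "\<And>n. (\<Sum>k<broom_size n. (depth n k + 0) powr 1) / real (broom_size n) \<le> K"
    using depth_moment_bounded[of 1 0] by auto
  have "avg height (broom n) \<le> max 0 K" for n
    using K[of n] by (simp add: avg_broom height_def depth_nonneg)
  then show ?thesis by (intro that[of "max 0 K"]) auto
qed

lemma Xb_bmo_norm_p_le:
  assumes p: "0 < p"
  shows "\<exists>C. \<forall>f\<in>BMO Xb rho. bmo_norm Xb rho p f \<le> ereal C * bmo_norm Xb rho 1 f"
proof -
  obtain H where H: "0 \<le> H" "\<And>n. avg height (broom n) \<le> H"
    by (rule avg_height_bounded) auto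
  obtain K where K: "\<And>n. (\<Sum>k<broom_size n. (depth n k + H) powr p) / real (broom_size n) \<le> K"
    using depth_moment_bounded[OF p H(1)] by blast
  define C where "C = 4 + 4 * K powr (1 / p)"
  have "bmo_norm Xb rho p f \<le> ereal C * bmo_norm Xb rho 1 f" if f: "f \<in> BMO Xb rho" for f
  proof -
    obtain N where N: "0 \<le> N" "bmo_norm Xb rho 1 f = ereal N"
      and osc: "\<And>B. B \<in> adm_balls Xb rho \<Longrightarrow> mean_osc 1 f B \<le> N"
      using BMO_normE[OF f broom_adm_ball[of 2]] by auto
    have CN: "4 * N \<le> C * N" "4 * N * K powr (1 / p) \<le> C * N"
      using N by (simp_all add: C_def algebra_simps)
    have "mean_osc p f B \<le> C * N" if B: "B \<in> adm_balls Xb rho" for B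
    proof -
      note fin = adm_ball_finite[OF B] and ne = adm_ball_nonempty[OF B]
      from B show ?thesis
      proof (cases rule: adm_ball_cases)
        case singleton
        then show ?thesis using p N CN by (simp add: mean_osc_singleton)
      next
        case (small x)
        have "card B \<le> 4"
          using card_mono[OF card_nbhd(1)[OF small(2)] small(3)] card_nbhd(2)[OF small(2)] by simp
        have "mean_osc p f B \<le> 4 * N"
        proof (rule mean_osc_le_const[OF fin ne p])
          fix y assume "y \<in> B"
          have "\<bar>f y - avg f B\<bar> \<le> real (card B) * N"
            by (rule abs_dev_le_card_osc[OF fin ne osc[OF B] \<open>y \<in> B\<close>])
          also have "\<dots> \<le> 4 * N" using \<open>card B \<le> 4\<close> N by (intro mult_right_mono) auto
          finally show "\<bar>f y - avg f B\<bar> \<le> 4 * N" .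
        qed (use N in simp)
        then show ?thesis using CN by linarith
      next
        case (whole n)
        have "mean_osc p f B
            \<le> 4 * N * ((\<Sum>y\<in>B. (height y + H) powr p) / real (card B)) powr (1 / p)"
          using N H whole broom_dev[OF osc N(1) H(2)] height_nonneg
          by (intro mean_osc_le_weighted[OF fin ne p]) auto
        also have "(\<Sum>y\<in>B. (height y + H) powr p) / real (card B)
            = (\<Sum>k<broom_size n. (depth n k + H) powr p) / real (broom_size n)"
          using whole by (simp add: sum_broom card_broom height_def)
        also have "4 * N * \<dots> powr (1 / p) \<le> 4 * N * K powr (1 / p)"
          using K[of n] N p
          by (intro mult_left_mono powr_mono2)
            (auto intro!: divide_nonneg_pos sum_nonneg broom_size_pos)
        finally show ?thesis using CN by linarith
      qed
    qed
    then have "bmo_norm Xb rho p f \<le> ereal (C * N)" by (rule bmo_norm_le)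
    then show ?thesis using N by simp
  qed
  then show ?thesis by blast
qed

lemma loc_int_height: "loc_int Xb rho height"
  unfolding loc_int_def
proof (intro ballI allI impI)
  fix x r assume "x \<in> Xb" "0 < (r::real)"
  let ?F = "\<Union>m\<le>max (broom_of x) (nat \<lceil>r\<rceil>). broom m"
  show "integrable (count_space (oball Xb rho x r)) height"
  proof (rule integrable_count_space_finite_support)
    show "finite ?F" by (simp add: finite_broom)
    fix y assume y: "y \<in> oball Xb rho x r - ?F"
    then have far: "max (broom_of x) (nat \<lceil>r\<rceil>) < broom_of y"
      by (auto simp: oball_def broom_def not_le)
    show "height y = 0"
    proof (rule ccontr)
      assume "height y \<noteq> 0"
      then have "vertex_of y \<noteq> 0"
        by (cases "vertex_of y = 0") (simp_all add: height_def depth_def)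
      then have "1 \<le> hub_dist y" by (simp add: hub_dist_def trunc_dist_bounds)
      then have "stretch (broom_of y) \<le> stretch (broom_of y) * hub_dist y"
        using stretch_ge_2[of "broom_of y"] by simp
      moreover have "0 \<le> stretch (broom_of x) * hub_dist x"
        using stretch_ge_2[of "broom_of x"] hub_dist_nonneg[of x] by simp
      moreover have "r < stretch (broom_of y)" using far by (simp add: stretch_def) linarith
      ultimately show False using y far by (simp add: oball_def rho_other)
    qed
  qed
qed

lemma height_in_BMO: "height \<in> BMO Xb rho"
proof -
  obtain H where H: "0 \<le> H" "\<And>n. avg height (broom n) \<le> H"
    by (rule avg_height_bounded) auto
  have "mean_osc 1 height B \<le> 2 * max 1 H" if B: "B \<in> adm_balls Xb rho" for B
  proof -
    note fin = adm_ball_finite[OF B] and ne = adm_ball_nonempty[OF B]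
    from B show ?thesis
    proof (cases rule: adm_ball_cases)
      case singleton
      then show ?thesis by (simp add: mean_osc_singleton)
    next
      case (small x)
      have "mean_osc 1 height B \<le> 2 * avg (\<lambda>_. 1) B"
        using height_nbhd small(3) by (intro mean_osc_1_le_dev[OF fin ne]) auto
      then show ?thesis using fin ne by (simp add: avg_def)
    next
      case (whole n)
      have "mean_osc 1 height B \<le> 2 * avg height B"
        using height_nonneg by (intro mean_osc_1_le_dev[OF fin ne, where c = 0]) auto
      then show ?thesis using whole H(2)[of n] by simp
    qed
  qed
  then show ?thesis by (rule BMOI[OF loc_int_height])
qed

lemma broom_size_le: "real (broom_size n) \<le> 3 ^ (n + 1)"
proof -
  have "1 + n\<^sup>2 \<le> 2 * 3 ^ n"
  proof (induction n)
    case (Suc n)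
    then show ?case using power_gt_expt[of 3 n] by (simp add: power2_eq_square)
  qed simp
  then have "broom_size n \<le> 3 ^ (n + 1)" by (simp add: broom_size_def handle_len_def)
  then have "real (broom_size n) \<le> real (3 ^ (n + 1))" by (rule of_nat_mono)
  then show ?thesis by simp
qed

lemma broom_tail_ge:
  assumes H: "avg height (broom n) \<le> H" and lam: "lam < real (handle_len n) - H"
  shows "1 / 3 ^ (n + 1)
    \<le> real (card {x\<in>broom n. \<bar>height x - avg height (broom n)\<bar> > lam}) / real (card (broom n))"
proof -
  let ?E = "{x\<in>broom n. \<bar>height x - avg height (broom n)\<bar> > lam}"
  have "height (node n (handle_len n)) = real (handle_len n)"
    by (simp add: height_def depth_def)
  then have "node n (handle_len n) \<in> ?E"
    using H lam avg_height_nonneg[of n] by (simp add: broom_eq_image broom_size_def)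
  then have "0 < card ?E"
    using finite_subset[of ?E "broom n"] finite_broom[of n] by (auto simp: card_gt_0_iff)
  then have "1 / real (broom_size n) \<le> real (card ?E) / real (card (broom n))"
    using broom_size_pos[of n] by (simp add: card_broom divide_right_mono)
  moreover have "1 / 3 ^ (n + 1) \<le> 1 / real (broom_size n)"
    using broom_size_le[of n] broom_size_pos[of n]
    by (intro divide_left_mono) (auto intro: mult_pos_pos)
  ultimately show ?thesis by linarith
qed

lemma exp_lower_bound: "real l * 3 ^ m \<le> exp (real l + 2 * real m)"
proof -
  have "real l \<le> exp (real l)" using exp_ge_add_one_self[of "real l"] by linarith
  moreover have "(3::real) ^ m \<le> exp 2 ^ m"
    using exp_ge_add_one_self[of 2] by (intro power_mono) auto
  moreover have "exp 2 ^ m = exp (2 * real m)"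
    using exp_of_nat_mult[of m "2::real"] by (simp add: mult.commute)
  ultimately show ?thesis by (simp add: exp_add mult_mono)
qed

text \<open>The witness for \<open>l\<close> is broom \<open>n = 4 l + \<lceil>H\<rceil> + 2\<close> with \<open>\<lambda> = n\<^sup>2 - H - 1\<close>.\<close>

lemma height_tail:
  "\<forall>l::nat. l \<ge> 1 \<longrightarrow>
     (\<exists>B\<in>adm_balls Xb rho. \<exists>lam::real. lam > 0 \<and>
        real (card {x\<in>B. \<bar>height x - avg height B\<bar> > lam}) / real (card B)
          > real l * exp (- lam / real l))"
proof (intro allI impI)
  fix l :: nat assume l: "l \<ge> 1"
  obtain H where H: "0 \<le> H" "\<And>n. avg height (broom n) \<le> H"
    by (rule avg_height_bounded) auto
  define K where "K = nat \<lceil>H\<rceil> + 2"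
  define n where "n = 4 * l + K"
  define lam where "lam = real (handle_len n) - H - 1"
  have K: "H + 2 \<le> real K" "2 \<le> K" unfolding K_def by linarith+
  have big: "real l + 2 * real (n + 1) < lam / real l"
  proof -
    have "real (handle_len n) = 16 * (real l * real l) + 8 * (real l * real K) + real K * real K"
      by (simp add: handle_len_def n_def power2_eq_square algebra_simps)
    moreover have "real l * (real l + 2 * real (n + 1))
        = 9 * (real l * real l) + 2 * (real l * real K) + 2 * real l"
      by (simp add: n_def algebra_simps)
    moreover have "2 * real K \<le> real K * real K" using K(2) by (intro mult_right_mono) auto
    moreover have "real l \<le> real l * real l" using l by (simp add: le_square)
    moreover have "0 \<le> real l * real K" by simp
    ultimately have "real l * (real l + 2 * real (n + 1)) < lam"
      using K(1) unfolding lam_def by linarith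
    then show ?thesis using l by (simp add: pos_less_divide_eq mult.commute)
  qed
  have "real l * exp (- lam / real l) < 1 / 3 ^ (n + 1)"
  proof -
    have "real l * 3 ^ (n + 1) \<le> exp (real l + 2 * real (n + 1))" by (rule exp_lower_bound)
    also have "\<dots> < exp (lam / real l)" using big by simp
    finally have "real l * exp (- lam / real l) * 3 ^ (n + 1)
        < exp (lam / real l) * exp (- lam / real l)"
      by (simp add: mult.commute mult.left_commute)
    also have "\<dots> = 1" by (simp flip: exp_add)
    finally show ?thesis by (simp add: pos_less_divide_eq)
  qed
  moreover have "1 / 3 ^ (n + 1)
      \<le> real (card {x\<in>broom n. \<bar>height x - avg height (broom n)\<bar> > lam}) / real (card (broom n))"
    by (rule broom_tail_ge[OF H(2)]) (simp add: lam_def)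
  ultimately have tail: "real (card {x\<in>broom n. \<bar>height x - avg height (broom n)\<bar> > lam})
      / real (card (broom n)) > real l * exp (- lam / real l)"
    by linarith
  have "0 < lam / real l" using big by linarith
  then have "0 < lam" using l by (simp add: zero_less_divide_iff)
  moreover have "broom n \<in> adm_balls Xb rho" using K(2) by (intro broom_adm_ball) (simp add: n_def)
  ultimately show "\<exists>B\<in>adm_balls Xb rho. \<exists>lam::real. lam > 0 \<and>
        real (card {x\<in>B. \<bar>height x - avg height B\<bar> > lam}) / real (card B)
          > real l * exp (- lam / real l)"
    using tail by blast
qed

theorem mainTheorem14:
  shows "\<exists>(X :: nat set) (\<rho> :: nat \<Rightarrow> nat \<Rightarrow> real).
    metric_on X \<rho> \<and>
    (\<forall>p::real. p > 1 \<longrightarrow>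
       (\<exists>C::real. \<forall>f\<in>BMO X \<rho>. bmo_norm X \<rho> p f \<le> ereal C * bmo_norm X \<rho> 1 f)) \<and>
    (\<exists>g\<in>BMO X \<rho>. \<forall>l::nat. l \<ge> 1 \<longrightarrow>
       (\<exists>B\<in>adm_balls X \<rho>. \<exists>lam::real. lam > 0 \<and>
          real (card {x\<in>B. \<bar>g x - avg g B\<bar> > lam}) / real (card B)
            > real l * exp (- lam / real l))) \<and>
    \<not> (\<exists>c1 c2 :: real. c1 > 0 \<and> c2 > 0 \<and>
       (\<forall>f\<in>BMO X \<rho>. \<forall>B\<in>adm_balls X \<rho>. \<forall>lam::real. lam > 0 \<longrightarrow>
          real (card {x\<in>B. \<bar>f x - avg f B\<bar> > lam}) / real (card B)
            \<le> c1 * exp (- c2 * lam / real_of_ereal (bmo_norm X \<rho> 1 f))))"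
proof (intro exI[of _ Xb] exI[of _ rho] conjI)
  show "\<forall>p::real. p > 1 \<longrightarrow>
      (\<exists>C. \<forall>f\<in>BMO Xb rho. bmo_norm Xb rho p f \<le> ereal C * bmo_norm Xb rho 1 f)"
    using Xb_bmo_norm_p_le by simp
qed (fact metric_on_Xb no_John_Nirenberg[OF height_in_BMO height_tail]
    | use height_in_BMO height_tail in blast)+

end
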